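(* For $t\in[0,1]$ define on $\mathbb{R}_+$ $$g_t(x)=\frac{t+1}{2}\,e^{-x}\left(x-1+\sqrt{\frac{1-t}{1+t}}\right)^2,$$ and let $f_0(x)=e^{-x}$. Then $f_0\succ g_t$ for every $t\in[0,1]$.
   Context: Majorization on $\mathbb{R}_+$ (Lebesgue measure): $f\succ g$ means $\int_0^\infty f=\int_0^\infty g$ and $\int_0^\infty[f(x)-t]_+dx\ge\int_0^\infty[g(x)-t]_+dx$ for all $t\ge0$, where $[z]_+=\max(z,0)$. *)

theory Defs
  imports "HOL-Analysis.Analysis"
begin

definition majorizes :: "(real \<Rightarrow> real) \<Rightarrow> (real \<Rightarrow> real) \<Rightarrow> bool" where
  "majorizes f g \<longleftrightarrow>
     set_integrable lborel {0..} f \<and> set_integrable lborel {0..} g \<and>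
     (LINT x:{0..}|lborel. f x) = (LINT x:{0..}|lborel. g x) \<and>
     (\<forall>t::real. t \<ge> 0 \<longrightarrow>
        (LINT x:{0..}|lborel. max (f x - t) 0) \<ge> (LINT x:{0..}|lborel. max (g x - t) 0))"

definition f0 :: "real \<Rightarrow> real" where
  "f0 x = exp (- x)"

definition g :: "real \<Rightarrow> real \<Rightarrow> real" where
  "g t x = (t + 1) / 2 * exp (- x) * (x - 1 + sqrt ((1 - t) / (1 + t)))\<^sup>2"

end

theory Submission
  imports Defs "HOL-Real_Asymp.Real_Asymp"
begin

text \<open>
  Write \<open>g t = exp_square c a\<close>, i.e. \<open>g t x = c * exp (-x) * (x - a)\<^sup>2\<close>, with
  \<open>c = (1 + t) / 2\<close>, \<open>a = 1 - s\<close> and \<open>s\<^sup>2 = (1 - t) / (1 + t)\<close>. Both densities have mass 1,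
  so \<open>\<integral>[h - \<tau>]\<^sub>+ = 1 - \<integral>min h \<tau>\<close> for either of them; moreover \<open>ln c \<ge> 1 - 1/c = -s\<^sup>2 \<ge> a - 1\<close>.

  If \<open>\<tau>\<close> is at least the peak \<open>4 c exp (-a - 2)\<close> of \<open>g t\<close> on \<open>[a,\<infinity>)\<close>, then
  \<open>[g t x - \<tau>]\<^sub>+ \<le> [exp (-x) - \<tau>]\<^sub>+\<close> pointwise, because \<open>g t x \<le> exp (-x)\<close> on \<open>[0,a]\<close>.
  Otherwise \<open>g t\<close> falls to the level \<open>\<tau>\<close> at some \<open>a + u\<close> with \<open>u \<ge> 2\<close>, and \<open>min (g t) \<tau>\<close>
  dominates the function that vanishes on \<open>[0,a]\<close>, is \<open>\<tau> ((x - a) / 2)\<^sup>2\<close> on \<open>[a,a+2]\<close>,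
  \<open>\<tau>\<close> on \<open>[a+2,a+u]\<close> and \<open>g t\<close> beyond. Its integral \<open>\<tau> (u - 1/3 + 2/u + 2/u\<^sup>2)\<close>
  exceeds \<open>\<integral>min (exp (-x)) \<tau> = \<tau> (1 - ln \<tau>)\<close>, because \<open>ln \<tau> = ln c - a - u + 2 ln u\<close>
  and \<open>2 ln u + 2/u + 2/u\<^sup>2 \<ge> 7/3\<close> for \<open>u \<ge> 2\<close>.
\<close>

lemma continuous_dominated_set_integrable_lborel:
  fixes \<phi> h :: "'a::euclidean_space \<Rightarrow> real"
  assumes \<phi>: "continuous_on UNIV \<phi>" and S: "closed S" and h: "h integrable_on S"
    and le: "\<And>x. x \<in> S \<Longrightarrow> \<bar>\<phi> x\<bar> \<le> h x"
  shows "set_integrable lborel S \<phi>"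
proof -
  have S_borel: "S \<in> sets borel" using S by (rule borel_closed)
  then have S_lebesgue: "S \<in> sets lebesgue" by simp
  have "\<phi> absolutely_integrable_on S"
  proof (rule measurable_bounded_by_integrable_imp_absolutely_integrable[OF _ S_lebesgue h])
    show "\<phi> \<in> borel_measurable (lebesgue_on S)"
      by (rule continuous_imp_measurable_on_sets_lebesgue[OF continuous_on_subset[OF \<phi>] S_lebesgue]) simp
  qed (use le in auto)
  moreover have "(\<lambda>x. indicator S x *\<^sub>R \<phi> x) \<in> borel_measurable lborel"
    using borel_measurable_continuous_onI[OF \<phi>] S_borel by measurable
  ultimately show ?thesis
    unfolding set_integrable_def by (simp add: integrable_completion)
qed

lemma integrable_on_max_diff_min:
  fixes h :: "'a::euclidean_space \<Rightarrow> real"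
  assumes h: "continuous_on UNIV h" and S: "closed S" and h_int: "h integrable_on S"
    and h_nonneg: "\<And>x. x \<in> S \<Longrightarrow> 0 \<le> h x" and \<tau>: "0 \<le> \<tau>"
  shows "(\<lambda>x. max (h x - \<tau>) 0) integrable_on S" "(\<lambda>x. min (h x) \<tau>) integrable_on S"
  using h_nonneg \<tau>
  by (auto intro!: set_borel_integral_eq_integral(1) continuous_dominated_set_integrable_lborel[OF _ S h_int]
      continuous_intros h)

lemma integral_max_diff_eq_integral_min:
  fixes h :: "'a::euclidean_space \<Rightarrow> real"
  assumes h: "continuous_on UNIV h" and S: "closed S" and I: "(h has_integral I) S"
    and h_nonneg: "\<And>x. x \<in> S \<Longrightarrow> 0 \<le> h x" and \<tau>: "0 \<le> \<tau>"
  shows "integral S (\<lambda>x. max (h x - \<tau>) 0) = I - integral S (\<lambda>x. min (h x) \<tau>)"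
proof -
  have "(\<lambda>x. min (h x) \<tau>) integrable_on S"
    using I by (intro integrable_on_max_diff_min(2)[OF h S _ h_nonneg \<tau>]) blast
  then have "((\<lambda>x. h x - min (h x) \<tau>) has_integral (I - integral S (\<lambda>x. min (h x) \<tau>))) S"
    using I by (intro has_integral_diff integrable_integral)
  moreover have "(\<lambda>x. h x - min (h x) \<tau>) = (\<lambda>x. max (h x - \<tau>) 0)"
    by (auto simp: fun_eq_iff)
  ultimately show ?thesis by (simp add: integral_unique)
qed

lemma majorizesI_has_integral:
  fixes \<phi> \<psi> :: "real \<Rightarrow> real"
  assumes \<phi>: "continuous_on UNIV \<phi>" and \<psi>: "continuous_on UNIV \<psi>"
    and \<phi>_nonneg: "\<And>x. 0 \<le> x \<Longrightarrow> 0 \<le> \<phi> x" and \<psi>_nonneg: "\<And>x. 0 \<le> x \<Longrightarrow> 0 \<le> \<psi> x"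
    and I\<phi>: "(\<phi> has_integral I) {0..}" and I\<psi>: "(\<psi> has_integral I) {0..}"
    and le: "\<And>\<tau>. 0 \<le> \<tau> \<Longrightarrow>
      integral {0..} (\<lambda>x. max (\<psi> x - \<tau>) 0) \<le> integral {0..} (\<lambda>x. max (\<phi> x - \<tau>) 0)"
  shows "majorizes \<phi> \<psi>"
proof -
  have lborel: "set_integrable lborel {0..} h \<and> (LINT x:{0..}|lborel. h x) = I \<and>
    (\<forall>\<tau>\<ge>0. (LINT x:{0..}|lborel. max (h x - \<tau>) 0) = integral {0..} (\<lambda>x. max (h x - \<tau>) 0))"
    if h: "continuous_on UNIV h" "(h has_integral I) {0..}" "\<And>x. 0 \<le> x \<Longrightarrow> 0 \<le> h x"
    for h :: "real \<Rightarrow> real"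
  proof (intro conjI allI impI)
    have h_int: "h integrable_on {0..}" using h(2) by blast
    show h_lborel: "set_integrable lborel {0..} h"
      by (rule continuous_dominated_set_integrable_lborel[OF h(1) _ h_int]) (use h(3) in auto)
    show "(LINT x:{0..}|lborel. h x) = I"
      using set_borel_integral_eq_integral(2)[OF h_lborel] h(2) integral_unique by metis
    fix \<tau> :: real assume "0 \<le> \<tau>"
    then have "set_integrable lborel {0..} (\<lambda>x. max (h x - \<tau>) 0)"
      by (intro continuous_dominated_set_integrable_lborel[OF _ _ h_int] continuous_intros h(1))
         (use h(3) in auto)
    then show "(LINT x:{0..}|lborel. max (h x - \<tau>) 0) = integral {0..} (\<lambda>x. max (h x - \<tau>) 0)"
      by (rule set_borel_integral_eq_integral(2))
  qed
  show ?thesis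
    unfolding majorizes_def
    using lborel[OF \<phi> I\<phi> \<phi>_nonneg] lborel[OF \<psi> I\<psi> \<psi>_nonneg] le by auto
qed

lemma has_integral_exp_minus_atLeast: "((\<lambda>x::real. exp (-x)) has_integral exp (-b)) {b..}"
  using has_integral_exp_minus_to_infinity[of 1 b] by simp

lemma has_integral_min_exp_minus:
  fixes \<tau> :: real
  assumes "0 < \<tau>" "\<tau> \<le> 1"
  shows "((\<lambda>x. min (exp (-x)) \<tau>) has_integral \<tau> * (1 - ln \<tau>)) {0..}"
proof -
  define L where "L = - ln \<tau>"
  have L: "0 \<le> L" "exp (-L) = \<tau>" using assms by (simp_all add: L_def)
  have "((\<lambda>x. \<tau>) has_integral \<tau> * L) {0..L}"
    using has_integral_const_real[of \<tau> 0 L] L(1) by (simp add: mult.commute)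
  then have head: "((\<lambda>x. min (exp (-x)) \<tau>) has_integral \<tau> * L) {0..L}"
    by (rule has_integral_eq[rotated]) (use L in auto)
  have "((\<lambda>x. exp (-x)) has_integral \<tau>) {L..}"
    using has_integral_exp_minus_atLeast[of L] L(2) by simp
  then have tail: "((\<lambda>x. min (exp (-x)) \<tau>) has_integral \<tau>) {L..}"
    by (rule has_integral_eq[rotated]) (use L in auto)
  have "((\<lambda>x. min (exp (-x)) \<tau>) has_integral \<tau> * L + \<tau>) ({0..L} \<union> {L..})"
    by (rule has_integral_Un[OF head tail]) (auto intro: negligible_subset[of "{L}"])
  moreover have "{0..L} \<union> {L..} = {0..}" using L(1) by auto
  ultimately show ?thesis by (simp add: L_def algebra_simps)
qed

definition exp_square :: "real \<Rightarrow> real \<Rightarrow> real \<Rightarrow> real" where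
  "exp_square c a x = c * exp (-x) * (x - a)\<^sup>2"

lemma continuous_on_exp_square: "continuous_on S (exp_square c a)"
  unfolding exp_square_def by (intro continuous_intros)

lemma exp_square_nonneg: "0 \<le> c \<Longrightarrow> 0 \<le> exp_square c a x"
  by (simp add: exp_square_def)

lemma has_integral_exp_square:
  "(exp_square c a has_integral c * exp (-b) * ((b - a)\<^sup>2 + 2 * (b - a) + 2)) {b..}"
proof -
  define P where "P x = exp (-x) * ((x - a)\<^sup>2 + 2 * (x - a) + 2)" for x
  have "((\<lambda>x. exp (-x) * (x - a)\<^sup>2) has_integral P b) {b..}"
  proof (rule has_integral_to_inf)
    show "(\<lambda>x. exp (-x) * (x - a)\<^sup>2) integrable_on {b..y}" for y
      by (intro integrable_continuous_interval continuous_intros)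
    show "0 \<le> exp (-x) * (x - a)\<^sup>2" for x by simp
    have "((\<lambda>x. exp (-x) * (x - a)\<^sup>2) has_integral P b - P y) {b..y}" if "b \<le> y" for y
    proof -
      have "((\<lambda>x. exp (-x) * (x - a)\<^sup>2) has_integral (-P y) - (-P b)) {b..y}"
        using that unfolding P_def
        by (intro fundamental_theorem_of_calculus)
           (auto intro!: derivative_eq_intros simp flip: has_real_derivative_iff_has_vector_derivative
                 simp: algebra_simps power2_eq_square)
      then show ?thesis by simp
    qed
    then have integral_eq: "\<forall>\<^sub>F y in at_top. integral {b..y} (\<lambda>x. exp (-x) * (x - a)\<^sup>2) = P b - P y"
      using eventually_at_top_linorder integral_unique by blast
    have "((\<lambda>y. P b - P y) \<longlongrightarrow> P b) at_top"
      unfolding P_def by real_asymp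
    then show "((\<lambda>y. integral {b..y} (\<lambda>x. exp (-x) * (x - a)\<^sup>2)) \<longlongrightarrow> P b) at_top"
      by (simp add: tendsto_cong[OF integral_eq])
  qed
  from has_integral_mult_right[OF this, of c] show ?thesis
    by (simp add: exp_square_def[abs_def] P_def mult.assoc)
qed

lemma has_integral_exp_square_atLeast_0:
  "(exp_square c a has_integral c * (a\<^sup>2 - 2 * a + 2)) {0..}"
  using has_integral_exp_square[of c a 0] by (simp add: power2_eq_square algebra_simps)

lemma exp_square_antimono:
  assumes "a + 2 \<le> x" "x \<le> y" "0 \<le> c"
  shows "exp_square c a y \<le> exp_square c a x"
proof -
  define d where "d = y - x"
  have d: "0 \<le> d" using assms by (simp add: d_def)
  have "(x - a) * (1 + d/2) - (y - a) = d * ((x - a)/2 - 1)" by (simp add: d_def field_simps)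
  moreover have "0 \<le> d * ((x - a)/2 - 1)" using assms d by (intro mult_nonneg_nonneg) auto
  ultimately have "y - a \<le> (x - a) * (1 + d/2)" by linarith
  also have "\<dots> \<le> (x - a) * exp (d/2)"
    using exp_ge_add_one_self[of "d/2"] assms by (intro mult_left_mono) auto
  finally have "(y - a)\<^sup>2 \<le> ((x - a) * exp (d/2))\<^sup>2" using assms by (intro power_mono) auto
  also have "\<dots> = (x - a)\<^sup>2 * exp d"
    by (simp add: power_mult_distrib power2_eq_square flip: exp_add)
  finally have "c * exp (-y) * (y - a)\<^sup>2 \<le> c * exp (-y) * ((x - a)\<^sup>2 * exp d)"
    using assms by (intro mult_left_mono) auto
  also have "\<dots> = exp_square c a x"
    by (simp add: exp_square_def d_def algebra_simps flip: exp_add)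
  finally show ?thesis by (simp add: exp_square_def)
qed

lemma exp_minus_mult_square_le:
  fixes v :: real
  assumes "0 \<le> v"
  shows "exp (-v) * v\<^sup>2 \<le> 4 * exp (-2)"
proof -
  have "(v/2)\<^sup>2 \<le> (exp (v/2 - 1))\<^sup>2"
    using exp_ge_add_one_self[of "v/2 - 1"] assms by (intro power_mono) auto
  also have "\<dots> = exp (v - 2)" by (simp flip: exp_add add: power2_eq_square)
  finally have "exp (-v) * v\<^sup>2 \<le> exp (-v) * (4 * exp (v - 2))"
    by (intro mult_left_mono) (auto simp: power_divide)
  also have "\<dots> = 4 * exp (-2)" by (simp flip: exp_add)
  finally show ?thesis .
qed

lemma exp_square_le_peak:
  assumes "a \<le> x" "0 \<le> c"
  shows "exp_square c a x \<le> exp_square c a (a + 2)"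
proof -
  have "exp_square c a x = c * exp (-a) * (exp (-(x - a)) * (x - a)\<^sup>2)"
    by (simp add: exp_square_def algebra_simps flip: exp_add)
  also have "\<dots> \<le> c * exp (-a) * (4 * exp (-2))"
    using assms by (intro mult_left_mono exp_minus_mult_square_le) auto
  also have "\<dots> = exp_square c a (a + 2)"
    by (simp add: exp_square_def algebra_simps flip: exp_add)
  finally show ?thesis .
qed

lemma exp_square_crossing:
  assumes "0 < \<tau>" "\<tau> \<le> exp_square c a (a + 2)"
  obtains u where "2 \<le> u" "exp_square c a (a + u) = \<tau>"
proof -
  have "(exp_square c a \<longlongrightarrow> 0) at_top" unfolding exp_square_def by real_asymp
  then have "\<forall>\<^sub>F x in at_top. exp_square c a x < \<tau>"
    using assms(1) by (simp add: order_tendsto_iff)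
  then obtain N where N: "\<And>x. N \<le> x \<Longrightarrow> exp_square c a x < \<tau>"
    by (auto simp: eventually_at_top_linorder)
  define X where "X = max N (a + 2)"
  have "exp_square c a X \<le> \<tau>" using N[of X] by (simp add: X_def)
  then obtain x where "a + 2 \<le> x" "x \<le> X" "exp_square c a x = \<tau>"
    using IVT2'[of "exp_square c a" X \<tau> "a + 2"] assms(2) continuous_on_exp_square
    by (auto simp: X_def)
  then show thesis using that[of "x - a"] by simp
qed

definition exp_square_minorant :: "real \<Rightarrow> real \<Rightarrow> real \<Rightarrow> real \<Rightarrow> real" where
  "exp_square_minorant c a u x =
    (let \<tau> = exp_square c a (a + u) in
     if x \<le> a then 0 else if x \<le> a + 2 then \<tau> * ((x - a) / 2)\<^sup>2
     else if x \<le> a + u then \<tau> else exp_square c a x)"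

lemma has_integral_exp_square_minorant:
  fixes a c u :: real
  assumes a: "0 \<le> a" and u: "2 \<le> u"
  defines "\<tau> \<equiv> exp_square c a (a + u)"
  shows "(exp_square_minorant c a u has_integral \<tau> * (u - 1/3 + 2/u + 2/u\<^sup>2)) {0..}"
proof -
  let ?m = "exp_square_minorant c a u"
  have p1: "(?m has_integral 0) {0..a}"
    by (rule has_integral_eq[rotated, OF has_integral_0]) (auto simp: exp_square_minorant_def)
  have "((\<lambda>x. \<tau> * ((x - a) / 2)\<^sup>2) has_integral 2 * \<tau> / 3) {a..a+2}"
  proof -
    have "((\<lambda>x. \<tau> * ((x - a) / 2)\<^sup>2) has_integral \<tau> * ((a + 2) - a)^3 / 12 - \<tau> * (a - a)^3 / 12)
      {a..a+2}"
      by (intro fundamental_theorem_of_calculus)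
         (auto intro!: derivative_eq_intros simp flip: has_real_derivative_iff_has_vector_derivative
               simp: field_simps power2_eq_square power3_eq_cube)
    then show ?thesis by simp
  qed
  then have p2: "(?m has_integral 2 * \<tau> / 3) {a..a+2}"
    by (rule has_integral_eq[rotated, where f="\<lambda>x. \<tau> * ((x - a) / 2)\<^sup>2"])
       (auto simp: exp_square_minorant_def \<tau>_def[symmetric])
  have "((\<lambda>x. \<tau>) has_integral \<tau> * (u - 2)) {a+2..a+u}"
    using has_integral_const_real[of \<tau> "a + 2" "a + u"] u by (simp add: mult.commute)
  then have p3: "(?m has_integral \<tau> * (u - 2)) {a+2..a+u}"
    by (rule has_integral_eq[rotated]) (auto simp: exp_square_minorant_def \<tau>_def[symmetric])
  have "c * exp (-(a + u)) * (u\<^sup>2 + 2 * u + 2) = \<tau> * (1 + 2/u + 2/u\<^sup>2)"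
    using u by (simp add: \<tau>_def exp_square_def field_simps power2_eq_square)
  then have "(exp_square c a has_integral \<tau> * (1 + 2/u + 2/u\<^sup>2)) {a+u..}"
    using has_integral_exp_square[of c a "a + u"] by simp
  then have p4: "(?m has_integral \<tau> * (1 + 2/u + 2/u\<^sup>2)) {a+u..}"
    by (rule has_integral_eq[rotated])
       (use u in \<open>auto simp: exp_square_minorant_def \<tau>_def Let_def\<close>)
  have "(?m has_integral 0 + 2 * \<tau> / 3 + \<tau> * (u - 2)) {0..a+u}"
    using a u by (intro has_integral_combine[OF _ _ has_integral_combine[OF _ _ p1 p2] p3]) auto
  then have "(?m has_integral 0 + 2 * \<tau> / 3 + \<tau> * (u - 2) + \<tau> * (1 + 2/u + 2/u\<^sup>2)) ({0..a+u} \<union> {a+u..})"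
    by (rule has_integral_Un[OF _ p4]) (auto intro: negligible_subset[of "{a + u}"])
  moreover have "{0..a+u} \<union> {a+u..} = {0..}" using a u by auto
  ultimately show ?thesis by (simp add: algebra_simps)
qed

lemma exp_square_minorant_le:
  assumes c: "0 \<le> c" and u: "2 \<le> u"
  shows "exp_square_minorant c a u x \<le> min (exp_square c a x) (exp_square c a (a + u))"
proof -
  let ?G = "exp_square c a"
  have G_nonneg: "0 \<le> ?G y" for y using c by (rule exp_square_nonneg)
  consider "x \<le> a" | "a < x" "x \<le> a + 2" | "a + 2 < x" "x \<le> a + u" | "a + u < x" by linarith
  then show ?thesis
  proof cases
    case 1
    then show ?thesis using G_nonneg by (simp add: exp_square_minorant_def)
  next
    case 2
    have "?G (a + u) \<le> ?G (a + 2)" using u c by (intro exp_square_antimono) auto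
    also have "\<dots> = 4 * c * exp (-(a + 2))" by (simp add: exp_square_def)
    also have "\<dots> \<le> 4 * c * exp (-x)" using 2 c by (intro mult_left_mono) auto
    finally have "?G (a + u) * ((x - a) / 2)\<^sup>2 \<le> 4 * c * exp (-x) * ((x - a) / 2)\<^sup>2"
      by (rule mult_right_mono) simp
    moreover have "?G (a + u) * ((x - a) / 2)\<^sup>2 \<le> ?G (a + u)"
      using 2 G_nonneg by (intro mult_left_le) (auto simp: power_le_one)
    ultimately show ?thesis
      using 2 by (simp add: exp_square_minorant_def exp_square_def power_divide)
  next
    case 3
    then have "?G (a + u) \<le> ?G x" using c by (intro exp_square_antimono) auto
    then show ?thesis using 3 by (simp add: exp_square_minorant_def)
  next
    case 4
    then have "?G x \<le> ?G (a + u)" using u c by (intro exp_square_antimono) auto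
    then show ?thesis using 4 u by (simp add: exp_square_minorant_def)
  qed
qed

lemma ln_plus_inverse_powers_ge:
  fixes u :: real
  assumes u: "2 \<le> u"
  shows "7/3 \<le> 2 * ln u + 2/u + 2/u\<^sup>2"
proof -
  define z where "z = 1/u"
  have "ln (2/u) \<le> 2/u - 1" using u by (intro ln_le_minus_one) auto
  moreover have "ln (2/u) = ln 2 - ln u" using u by (simp add: ln_div)
  ultimately have "ln 2 + 1 - 2 * z \<le> ln u" by (simp add: z_def)
  moreover have "2/3 \<le> ln (2::real)" by (rule ln2_ge_two_thirds)
  moreover have "0 \<le> 1 - 2 * z + 2 * z\<^sup>2"
    using sum_squares_ge_zero[of "1 - z" z] by (simp add: power2_eq_square algebra_simps)
  moreover have "2/u = 2 * z" "2/u\<^sup>2 = 2 * z\<^sup>2" by (simp_all add: z_def power2_eq_square)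
  ultimately show ?thesis by linarith
qed

lemma exp_square_peak_le_one:
  assumes "0 \<le> a" "0 \<le> c" "c \<le> 1"
  shows "exp_square c a (a + 2) \<le> 1"
proof -
  have "2 * 2 \<le> exp (1::real) * exp 1"
    using exp_ge_add_one_self[of 1] by (intro mult_mono) auto
  then have "4 \<le> exp (2::real)" by (simp flip: exp_add)
  then have "4 * exp (-(a + 2)) \<le> exp 2 * exp (-2)"
    using assms by (intro mult_mono) auto
  also have "\<dots> = 1" by (simp flip: exp_add)
  finally have "4 * exp (-(a + 2)) \<le> 1" .
  moreover have "exp_square c a (a + 2) = c * (4 * exp (-(a + 2)))" by (simp add: exp_square_def)
  ultimately show ?thesis using assms by (simp add: mult_le_one)
qed

lemma integral_min_exp_minus_le_integral_min_exp_square: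
  assumes a: "0 \<le> a" and c: "0 < c" "c \<le> 1" and ln_c: "a - 1 \<le> ln c"
    and \<tau>: "0 < \<tau>" "\<tau> \<le> exp_square c a (a + 2)"
  shows "integral {0..} (\<lambda>x. min (exp (-x)) \<tau>) \<le> integral {0..} (\<lambda>x. min (exp_square c a x) \<tau>)"
proof -
  obtain u where u: "2 \<le> u" and \<tau>_eq: "exp_square c a (a + u) = \<tau>"
    using exp_square_crossing[OF \<tau>] .
  have "\<tau> \<le> 1" using \<tau>(2) exp_square_peak_le_one[of a c] a c by linarith
  then have "integral {0..} (\<lambda>x. min (exp (-x)) \<tau>) = \<tau> * (1 - ln \<tau>)"
    using has_integral_min_exp_minus \<tau>(1) by (simp add: integral_unique)
  also have "\<dots> \<le> \<tau> * (u - 1/3 + 2/u + 2/u\<^sup>2)"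
  proof -
    have "\<tau> = c * exp (-(a + u)) * u\<^sup>2" using \<tau>_eq by (simp add: exp_square_def)
    then have "ln \<tau> = ln c - (a + u) + 2 * ln u"
      using c u by (simp add: ln_mult ln_realpow)
    then have "u - 1/3 + 2/u + 2/u\<^sup>2 - (1 - ln \<tau>) = (2 * ln u + 2/u + 2/u\<^sup>2 - 7/3) + (ln c - (a - 1))"
      by simp
    then have "1 - ln \<tau> \<le> u - 1/3 + 2/u + 2/u\<^sup>2"
      using ln_plus_inverse_powers_ge[OF u] ln_c by linarith
    then show ?thesis using \<tau>(1) by (intro mult_left_mono) auto
  qed
  also have "\<dots> = integral {0..} (exp_square_minorant c a u)"
    using has_integral_exp_square_minorant[OF a u, of c] \<tau>_eq by (simp add: integral_unique)
  also have "\<dots> \<le> integral {0..} (\<lambda>x. min (exp_square c a x) \<tau>)"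
  proof (rule integral_le)
    show "exp_square_minorant c a u integrable_on {0..}"
      using has_integral_exp_square_minorant[OF a u] by blast
    show "(\<lambda>x. min (exp_square c a x) \<tau>) integrable_on {0..}"
      using has_integral_exp_square_atLeast_0[of c a] c \<tau>(1)
      by (intro integrable_on_max_diff_min(2) continuous_on_exp_square exp_square_nonneg) auto
    show "exp_square_minorant c a u x \<le> min (exp_square c a x) \<tau>" for x
      using exp_square_minorant_le[of c u a x] c u \<tau>_eq by simp
  qed
  finally show ?thesis .
qed

lemma exp_square_max_le_exp_minus_max:
  assumes x: "0 \<le> x" and a: "a \<le> 1" and c: "0 \<le> c" "c \<le> 1"
    and \<tau>: "exp_square c a (a + 2) \<le> \<tau>"
  shows "max (exp_square c a x - \<tau>) 0 \<le> max (exp (-x) - \<tau>) 0"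
proof (cases "x \<le> a")
  case True
  then have "c * (x - a)\<^sup>2 \<le> 1"
    using x a c by (intro mult_le_one) (auto simp: abs_square_le_1)
  then have "exp_square c a x \<le> exp (-x)"
    using mult_left_mono[of _ 1 "exp (-x)"] by (simp add: exp_square_def mult.assoc mult.left_commute)
  then show ?thesis by simp
next
  case False
  then have "exp_square c a x \<le> \<tau>" using exp_square_le_peak[of a x c] c \<tau> by simp
  then show ?thesis by simp
qed

lemma integral_max_exp_square_le_integral_max_exp_minus:
  assumes a: "0 \<le> a" "a \<le> 1" and c: "0 < c" "c \<le> 1" and ln_c: "a - 1 \<le> ln c"
    and mass: "c * (a\<^sup>2 - 2 * a + 2) = 1" and \<tau>: "0 \<le> \<tau>"
  shows "integral {0..} (\<lambda>x. max (exp_square c a x - \<tau>) 0) \<le> integral {0..} (\<lambda>x. max (exp (-x) - \<tau>) 0)"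
proof -
  have G_nonneg: "0 \<le> exp_square c a x" for x using c by (simp add: exp_square_nonneg)
  have G: "(exp_square c a has_integral 1) {0..}"
    using has_integral_exp_square_atLeast_0[of c a] mass by simp
  have E: "((\<lambda>x::real. exp (-x)) has_integral 1) {0..}"
    using has_integral_exp_minus_atLeast[of 0] by simp
  have G_cont: "continuous_on UNIV (exp_square c a)" by (rule continuous_on_exp_square)
  have E_cont: "continuous_on UNIV (\<lambda>x::real. exp (-x))" by (intro continuous_intros)
  show ?thesis
  proof (cases "exp_square c a (a + 2) \<le> \<tau>")
    case True
    show ?thesis
    proof (rule integral_le)
      show "(\<lambda>x. max (exp_square c a x - \<tau>) 0) integrable_on {0..}"
        using G \<tau> G_nonneg by (intro integrable_on_max_diff_min(1)[OF G_cont]) auto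
      show "(\<lambda>x. max (exp (-x) - \<tau>) 0) integrable_on {0..}"
        using E \<tau> by (intro integrable_on_max_diff_min(1)[OF E_cont]) auto
      show "max (exp_square c a x - \<tau>) 0 \<le> max (exp (-x) - \<tau>) 0" if "x \<in> {0..}" for x
        using exp_square_max_le_exp_minus_max[of x a c \<tau>] that a c True by simp
    qed
  next
    case False
    have "integral {0..} (\<lambda>x. min (exp (-x)) \<tau>) \<le> integral {0..} (\<lambda>x. min (exp_square c a x) \<tau>)"
    proof (cases "\<tau> = 0")
      case True
      then show ?thesis by (simp add: G_nonneg min_absorb2)
    next
      case False
      then show ?thesis
        using integral_min_exp_minus_le_integral_min_exp_square[OF a(1) c ln_c] \<tau>
          \<open>\<not> exp_square c a (a + 2) \<le> \<tau>\<close> by simp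
    qed
    then show ?thesis
      using integral_max_diff_eq_integral_min[OF G_cont _ G] integral_max_diff_eq_integral_min[OF E_cont _ E]
        G_nonneg \<tau> by simp
  qed
qed

lemma majorizes_exp_minus_exp_square:
  assumes a: "0 \<le> a" "a \<le> 1" and c: "0 < c" "c \<le> 1" and ln_c: "a - 1 \<le> ln c"
    and mass: "c * (a\<^sup>2 - 2 * a + 2) = 1"
  shows "majorizes (\<lambda>x. exp (-x)) (exp_square c a)"
proof (rule majorizesI_has_integral)
  show "continuous_on UNIV (\<lambda>x::real. exp (-x))" by (intro continuous_intros)
  show "continuous_on UNIV (exp_square c a)" by (rule continuous_on_exp_square)
  show "0 \<le> exp_square c a x" for x using c by (simp add: exp_square_nonneg)
  show "((\<lambda>x::real. exp (-x)) has_integral 1) {0..}"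
    using has_integral_exp_minus_atLeast[of 0] by simp
  show "(exp_square c a has_integral 1) {0..}"
    using has_integral_exp_square_atLeast_0[of c a] mass by simp
  show "integral {0..} (\<lambda>x. max (exp_square c a x - \<tau>) 0) \<le> integral {0..} (\<lambda>x. max (exp (-x) - \<tau>) 0)"
    if "0 \<le> \<tau>" for \<tau>
    using integral_max_exp_square_le_integral_max_exp_minus[OF assms that] .
qed simp

theorem mainTheorem9:
  fixes t :: real
  assumes "0 \<le> t" and "t \<le> 1"
  shows "majorizes f0 (g t)"
proof -
  define s where "s = sqrt ((1 - t) / (1 + t))"
  define c where "c = (t + 1) / 2"
  have s: "0 \<le> s" "s \<le> 1" "s\<^sup>2 = (1 - t) / (1 + t)"
    using assms by (simp_all add: s_def)
  have c: "0 < c" "c \<le> 1" using assms by (simp_all add: c_def)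
  have c_inverse: "1 / c = 1 + s\<^sup>2" using assms by (simp add: c_def s field_simps)
  have "ln (1 / c) \<le> 1 / c - 1" using c by (intro ln_le_minus_one) auto
  then have "1 - 1 / c \<le> ln c" using c by (simp add: ln_div)
  moreover have "s\<^sup>2 \<le> s" using s(1,2) by (simp add: power2_eq_square mult_left_le)
  ultimately have "(1 - s) - 1 \<le> ln c" using c_inverse by linarith
  moreover have "c * ((1 - s)\<^sup>2 - 2 * (1 - s) + 2) = 1"
    using c c_inverse by (simp add: power2_eq_square field_simps)
  ultimately have "majorizes (\<lambda>x. exp (-x)) (exp_square c (1 - s))"
    using s c by (intro majorizes_exp_minus_exp_square) auto
  moreover have "f0 = (\<lambda>x. exp (-x))" "g t = exp_square c (1 - s)"
    by (simp_all add: fun_eq_iff f0_def g_def exp_square_def c_def s_def algebra_simps)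
  ultimately show ?thesis by simp
qed

end
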